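(* Let $(A,\cdot)$ be a commutative $\mathbb{Q}$-algebra and, for each $m\in\mathbb{N}$, let $w\mapsto f_w(m)$ be a $\mathbb{Q}$-algebra homomorphism $(\mathfrak{H}^1_z,\ast)\to(A,\cdot)$. For a nonempty word $w\in\mathfrak{H}^1_z$ and $M\in\mathbb{N}$ define \[ F_w(M):=\sum_{\substack{1\le k\le l(w)\\ w_1\cdots w_k=w}}\ \sum_{0<m_1<\dots<m_k<M}f_{w_1}(m_1)\cdots f_{w_k}(m_k)\in A, \] where $l(w)$ is the length of $w$ and the inner sum is over all decompositions of $w$ as a concatenation of $k$ nonempty words $w_1,\dots,w_k$; set $F_{\emptyset}(M)=1$ and extend linearly. Then for every $M\in\mathbb{N}$ the map $w\mapsto F_w(M)$ is an algebra homomorphism $(\mathfrak{H}^1_z,\ast)\to(A,\cdot)$; in particular $F_{u\ast v}(M)=F_u(M)F_v(M)$ for all $u,v\in\mathfrak{H}^1_z$.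
   Context: $\mathfrak{H}^1_z=\mathbb{Q}\langle z_1,z_2,\dots\rangle$ is the noncommutative polynomial algebra on letters $z_j$ ($j\in\mathbb{N}$), i.e. the $\mathbb{Q}$-span of words in these letters, equipped with the stuffle product $\ast$ defined bilinearly by $1\ast w=w\ast1=w$ and $z_aw\ast z_bv=z_a(w\ast z_bv)+z_b(z_aw\ast v)+z_{a+b}(w\ast v)$ for $a,b\in\mathbb{N}$ and words $w,v$; this is a commutative $\mathbb{Q}$-algebra. Algebra homomorphisms send the empty word to $1$. *)

theory Defs
  imports Complex_Main
begin

class q_algebra = comm_ring_1 +
  fixes scaleQ :: "rat \<Rightarrow> 'a \<Rightarrow> 'a"
  assumes scaleQ_add_right: "scaleQ r (x + y) = scaleQ r x + scaleQ r y"
    and scaleQ_add_left: "scaleQ (r + s) x = scaleQ r x + scaleQ s x"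
    and scaleQ_scaleQ: "scaleQ r (scaleQ s x) = scaleQ (r * s) x"
    and scaleQ_one: "scaleQ 1 x = x"
    and mult_scaleQ_left: "scaleQ r x * y = scaleQ r (x * y)"

text \<open>A word in the letters z_j (j \<ge> 1) is a list of positive naturals; the letter z_j
  is represented by j.\<close>

definition word_ok :: "nat list \<Rightarrow> bool" where
  "word_ok w \<longleftrightarrow> (\<forall>a\<in>set w. 0 < a)"

definition supp :: "(nat list \<Rightarrow> rat) \<Rightarrow> nat list set" where
  "supp p = {w. p w \<noteq> 0}"

definition Hz :: "(nat list \<Rightarrow> rat) set" where
  "Hz = {p. finite (supp p) \<and> (\<forall>w\<in>supp p. word_ok w)}"

definition pre :: "nat \<Rightarrow> (nat list \<Rightarrow> rat) \<Rightarrow> (nat list \<Rightarrow> rat)" where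
  "pre a p = (\<lambda>w. case w of [] \<Rightarrow> 0 | b # w' \<Rightarrow> if b = a then p w' else 0)"

fun stw :: "nat list \<Rightarrow> nat list \<Rightarrow> (nat list \<Rightarrow> rat)" where
  "stw [] v = (\<lambda>w. if w = v then 1 else 0)"
| "stw (a # u) [] = (\<lambda>w. if w = a # u then 1 else 0)"
| "stw (a # u) (b # v) =
     (\<lambda>w. pre a (stw u (b # v)) w + pre b (stw (a # u) v) w + pre (a + b) (stw u v) w)"

definition st :: "(nat list \<Rightarrow> rat) \<Rightarrow> (nat list \<Rightarrow> rat) \<Rightarrow> (nat list \<Rightarrow> rat)" where
  "st p q = (\<lambda>w. \<Sum>u\<in>supp p. \<Sum>v\<in>supp q. p u * q v * stw u v w)"

definition lin :: "(nat list \<Rightarrow> 'a::q_algebra) \<Rightarrow> (nat list \<Rightarrow> rat) \<Rightarrow> 'a" where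
  "lin f p = (\<Sum>u\<in>supp p. scaleQ (p u) (f u))"

definition is_hom :: "(nat list \<Rightarrow> 'a::q_algebra) \<Rightarrow> bool" where
  "is_hom f \<longleftrightarrow> f [] = 1 \<and> (\<forall>p\<in>Hz. \<forall>q\<in>Hz. lin f (st p q) = lin f p * lin f q)"

definition Fsum :: "(nat \<Rightarrow> nat list \<Rightarrow> 'a::q_algebra) \<Rightarrow> nat \<Rightarrow> nat list \<Rightarrow> 'a" where
  "Fsum f M w =
    (if w = [] then 1 else
     (\<Sum>ws\<in>{ws. concat ws = w \<and> [] \<notin> set ws}.
        \<Sum>ms\<in>{ms. length ms = length ws \<and> sorted_wrt (<) ms \<and> (\<forall>m\<in>set ms. 0 < m \<and> m < M)}.
          \<Prod>i<length ws. f (ms ! i) (ws ! i)))"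

end

theory Submission imports Defs begin

text \<open>A linear map \<open>lin g\<close> is a stuffle homomorphism iff \<open>g [] = 1\<close> and its value
  \<open>stuffle_eval g u v\<close> on the stuffle product of two words \<open>u, v\<close> is \<open>g u * g v\<close>. Such
  "multiplicative" maps are closed under the convolution dual to deconcatenation, because
  the stuffle product of \<open>u\<close> and \<open>v\<close> deconcatenates as the sum over all splittings
  \<open>u = u\<^sub>1u\<^sub>2\<close>, \<open>v = v\<^sub>1v\<^sub>2\<close> of (\<open>u\<^sub>1 * v\<^sub>1\<close>) \<open>\<otimes>\<close> (\<open>u\<^sub>2 * v\<^sub>2\<close>). Splitting off the
  largest summation index \<open>m\<^sub>k = M\<close> shows that \<open>F(M+1)\<close> is the convolution of \<open>F(M)\<close> with
  \<open>f(M)\<close>, and \<open>F(1)\<close> is the counit, so the theorem follows by induction on \<open>M\<close>.\<close>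

lemma scaleQ_zero_right [simp]: "scaleQ r (0::'a::q_algebra) = 0"
  using scaleQ_add_right[of r "0::'a" 0] by simp

lemma scaleQ_zero_left [simp]: "scaleQ 0 (x::'a::q_algebra) = 0"
  using scaleQ_add_left[of 0 0 x] by simp

lemma scaleQ_sum_left: "scaleQ (sum h I) (x::'a::q_algebra) = (\<Sum>i\<in>I. scaleQ (h i) x)"
  by (induction I rule: infinite_finite_induct) (auto simp: scaleQ_add_left)

lemma scaleQ_sum_right: "scaleQ r (sum h I) = (\<Sum>i\<in>I. scaleQ r (h i :: 'a::q_algebra))"
  by (induction I rule: infinite_finite_induct) (auto simp: scaleQ_add_right)

lemma mult_scaleQ_right: "(x::'a::q_algebra) * scaleQ r y = scaleQ r (x * y)"
  by (metis mult.commute mult_scaleQ_left)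

lemma lin_eq_sum_superset:
  "finite A \<Longrightarrow> supp p \<subseteq> A \<Longrightarrow> lin g p = (\<Sum>w\<in>A. scaleQ (p w) (g w))"
  unfolding lin_def by (rule sum.mono_neutral_left) (auto simp: supp_def)

lemma supp_sum_subset:
  "supp (\<lambda>w. \<Sum>i\<in>I. P i w) \<subseteq> (\<Union>i\<in>I. supp (P i))"
  by (auto simp: supp_def intro: ccontr)

lemma finite_supp_sum:
  "finite I \<Longrightarrow> (\<And>i. i \<in> I \<Longrightarrow> finite (supp (P i))) \<Longrightarrow> finite (supp (\<lambda>w. \<Sum>i\<in>I. P i w))"
  by (rule finite_subset[OF supp_sum_subset]) auto

lemma lin_sum:
  assumes "finite I" "\<And>i. i \<in> I \<Longrightarrow> finite (supp (P i))"
  shows "lin g (\<lambda>w. \<Sum>i\<in>I. P i w) = (\<Sum>i\<in>I. lin g (P i))"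
proof -
  let ?A = "\<Union>i\<in>I. supp (P i)"
  have fin: "finite ?A" using assms by auto
  have "lin g (\<lambda>w. \<Sum>i\<in>I. P i w) = (\<Sum>w\<in>?A. \<Sum>i\<in>I. scaleQ (P i w) (g w))"
    by (simp add: lin_eq_sum_superset[OF fin supp_sum_subset] scaleQ_sum_left)
  also have "\<dots> = (\<Sum>i\<in>I. \<Sum>w\<in>?A. scaleQ (P i w) (g w))"
    by (rule sum.swap)
  also have "\<dots> = (\<Sum>i\<in>I. lin g (P i))"
    by (intro sum.cong refl lin_eq_sum_superset[symmetric, OF fin]) auto
  finally show ?thesis .
qed

lemma lin_add:
  "finite (supp p) \<Longrightarrow> finite (supp q) \<Longrightarrow> lin g (\<lambda>w. p w + q w) = lin g p + lin g q"
  using lin_sum[of "{True, False}" "\<lambda>b. if b then p else q" g] by simp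

lemma lin_mult_const:
  assumes "finite (supp p)"
  shows "lin g (\<lambda>w. r * p w) = scaleQ r (lin g p)"
proof -
  have "lin g (\<lambda>w. r * p w) = (\<Sum>w\<in>supp p. scaleQ (r * p w) (g w))"
    by (rule lin_eq_sum_superset[OF assms]) (auto simp: supp_def)
  then show ?thesis
    by (simp add: lin_def scaleQ_sum_right scaleQ_scaleQ)
qed

lemma supp_indicator_word [simp]: "supp (\<lambda>w. if w = v then 1 else 0) = {v}"
  by (auto simp: supp_def)

lemma lin_indicator_word [simp]: "lin g (\<lambda>w. if w = v then 1 else 0) = g v"
  by (simp add: lin_def scaleQ_one)

lemma supp_pre: "supp (pre a p) = Cons a ` supp p"
  unfolding supp_def pre_def by (rule set_eqI, case_tac x) auto

lemma lin_pre: "lin g (pre a p) = lin (\<lambda>w. g (a # w)) p"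
  unfolding lin_def supp_pre by (subst sum.reindex) (auto simp: pre_def)

lemma finite_supp_pre: "finite (supp (pre a p)) \<longleftrightarrow> finite (supp p)"
  by (simp add: supp_pre finite_image_iff)

lemma finite_supp_add: "finite (supp p) \<Longrightarrow> finite (supp q) \<Longrightarrow> finite (supp (\<lambda>w. p w + q w))"
  by (rule finite_subset[of _ "supp p \<union> supp q"]) (auto simp: supp_def)

lemma finite_supp_stw: "finite (supp (stw u v))"
  by (induction u v rule: stw.induct) (auto intro!: finite_supp_add simp: finite_supp_pre)

fun stuffle_eval :: "(nat list \<Rightarrow> 'a::comm_ring_1) \<Rightarrow> nat list \<Rightarrow> nat list \<Rightarrow> 'a" where
  "stuffle_eval g [] v = g v"
| "stuffle_eval g (a # u) [] = g (a # u)"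
| "stuffle_eval g (a # u) (b # v) =
     stuffle_eval (\<lambda>w. g (a # w)) u (b # v) + stuffle_eval (\<lambda>w. g (b # w)) (a # u) v
     + stuffle_eval (\<lambda>w. g ((a + b) # w)) u v"

lemma stuffle_eval_Nil2 [simp]: "stuffle_eval g u [] = g u"
  by (cases u) auto

lemma lin_stw: "lin g (stw u v) = stuffle_eval g u v"
  by (induction u v arbitrary: g rule: stw.induct)
     (auto simp: lin_add lin_pre finite_supp_add finite_supp_pre finite_supp_stw)

lemma stuffle_eval_add [simp]:
  "stuffle_eval (\<lambda>w. g w + h w) u v = stuffle_eval g u v + stuffle_eval h u v"
  by (induction u v arbitrary: g h rule: stw.induct) (auto simp: algebra_simps)

lemma stuffle_eval_mult_const [simp]:
  "stuffle_eval (\<lambda>w. c * g w) u v = c * stuffle_eval g u v"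
  by (induction u v arbitrary: g rule: stw.induct) (auto simp: algebra_simps)

lemma stuffle_eval_zero [simp]: "stuffle_eval (\<lambda>w. 0) u v = 0"
  by (induction u v rule: stw.induct) auto

definition stuffle_multiplicative :: "(nat list \<Rightarrow> 'a::comm_ring_1) \<Rightarrow> bool" where
  "stuffle_multiplicative g \<longleftrightarrow>
     g [] = 1 \<and> (\<forall>u v. word_ok u \<longrightarrow> word_ok v \<longrightarrow> stuffle_eval g u v = g u * g v)"

lemma is_hom_iff_stuffle_multiplicative: "is_hom g \<longleftrightarrow> stuffle_multiplicative g"
proof
  assume hom: "is_hom g"
  have "stuffle_eval g u v = g u * g v" if "word_ok u" "word_ok v" for u v
  proof -
    have "(\<lambda>w. if w = u then 1 else 0) \<in> Hz" "(\<lambda>w. if w = v then 1 else 0) \<in> Hz"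
      using that by (simp_all add: Hz_def)
    with hom have "lin g (st (\<lambda>w. if w = u then 1 else 0) (\<lambda>w. if w = v then 1 else 0)) = g u * g v"
      unfolding is_hom_def by simp
    then show ?thesis by (simp add: st_def lin_stw)
  qed
  with hom show "stuffle_multiplicative g"
    by (simp add: is_hom_def stuffle_multiplicative_def)
next
  assume mult: "stuffle_multiplicative g"
  have "lin g (st p q) = lin g p * lin g q" if p: "p \<in> Hz" and q: "q \<in> Hz" for p q
  proof -
    have fin: "finite (supp p)" "finite (supp q)" using p q by (auto simp: Hz_def)
    have fin_term: "finite (supp (\<lambda>w. r * stw u v w))" for r u v
      by (rule finite_subset[OF _ finite_supp_stw[of u v]]) (auto simp: supp_def)
    have "lin g (st p q) = (\<Sum>u\<in>supp p. \<Sum>v\<in>supp q. lin g (\<lambda>w. p u * q v * stw u v w))"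
      unfolding st_def
      by (simp add: lin_sum fin finite_supp_sum fin_term)
    also have "\<dots> = (\<Sum>u\<in>supp p. \<Sum>v\<in>supp q. scaleQ (p u) (g u) * scaleQ (q v) (g v))"
    proof (intro sum.cong refl)
      fix u v assume "u \<in> supp p" "v \<in> supp q"
      then have "word_ok u" "word_ok v" using p q by (auto simp: Hz_def)
      with mult show "lin g (\<lambda>w. p u * q v * stw u v w) = scaleQ (p u) (g u) * scaleQ (q v) (g v)"
        by (simp only: lin_mult_const finite_supp_stw lin_stw stuffle_multiplicative_def
            mult_scaleQ_left mult_scaleQ_right scaleQ_scaleQ mult.commute[of "q v" "p u"])
    qed
    also have "\<dots> = lin g p * lin g q"
      by (simp add: lin_def sum_product)
    finally show ?thesis .
  qed
  with mult show "is_hom g"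
    by (simp add: is_hom_def stuffle_multiplicative_def)
qed

subsection \<open>Convolution dual to deconcatenation\<close>

definition deconc_conv :: "(nat list \<Rightarrow> 'a::comm_ring_1) \<Rightarrow> (nat list \<Rightarrow> 'a) \<Rightarrow> nat list \<Rightarrow> 'a" where
  "deconc_conv g h w = (\<Sum>k\<le>length w. g (take k w) * h (drop k w))"

lemma deconc_conv_Nil [simp]: "deconc_conv g h [] = g [] * h []"
  by (simp add: deconc_conv_def)

lemma deconc_conv_Cons [simp]:
  "deconc_conv g h (a # w) = g [] * h (a # w) + deconc_conv (\<lambda>x. g (a # x)) h w"
  unfolding deconc_conv_def by (simp only: length_Cons sum.atMost_Suc_shift) simp

lemma stuffle_eval_deconc_conv:
  "stuffle_eval (deconc_conv g h) u v =
     (\<Sum>i\<le>length u. \<Sum>j\<le>length v.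
        stuffle_eval g (take i u) (take j v) * stuffle_eval h (drop i u) (drop j v))"
proof (induction u v arbitrary: g rule: stw.induct)
  case (3 a u b v)
  then show ?case
    by (simp add: sum.atMost_Suc_shift del: sum.atMost_Suc) (simp add: sum.distrib algebra_simps)
qed (simp_all add: deconc_conv_def)

lemma word_ok_take: "word_ok u \<Longrightarrow> word_ok (take i u)"
  by (auto simp: word_ok_def dest: in_set_takeD)

lemma word_ok_drop: "word_ok u \<Longrightarrow> word_ok (drop i u)"
  by (auto simp: word_ok_def dest: in_set_dropD)

lemma stuffle_multiplicative_deconc_conv:
  assumes g: "stuffle_multiplicative g" and h: "stuffle_multiplicative h"
  shows "stuffle_multiplicative (deconc_conv g h)"
  unfolding stuffle_multiplicative_def
proof (intro conjI allI impI)
  show "deconc_conv g h [] = 1"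
    using g h by (simp add: stuffle_multiplicative_def)
  fix u v :: "nat list" assume u: "word_ok u" and v: "word_ok v"
  have "stuffle_eval (deconc_conv g h) u v = (\<Sum>i\<le>length u. \<Sum>j\<le>length v.
          (g (take i u) * h (drop i u)) * (g (take j v) * h (drop j v)))"
    unfolding stuffle_eval_deconc_conv using g h u v
    by (intro sum.cong refl) (simp add: stuffle_multiplicative_def word_ok_take word_ok_drop mult_ac)
  also have "\<dots> = deconc_conv g h u * deconc_conv g h v"
    by (simp add: deconc_conv_def sum_product)
  finally show "stuffle_eval (deconc_conv g h) u v = deconc_conv g h u * deconc_conv g h v" .
qed

definition counit :: "nat list \<Rightarrow> 'a::comm_ring_1" where
  "counit w = (if w = [] then 1 else 0)"

lemma stuffle_eval_counit: "stuffle_eval counit u v = (if u = [] \<and> v = [] then 1 else 0)"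
proof (induction u v rule: stw.induct)
  case (3 a u b v)
  have vanish: "(\<lambda>w. counit (c # w)) = (\<lambda>w. 0)" for c
    by (simp add: counit_def)
  show ?case by (simp only: stuffle_eval.simps vanish stuffle_eval_zero) simp
qed (auto simp: counit_def)

lemma stuffle_multiplicative_counit: "stuffle_multiplicative counit"
  by (simp add: stuffle_multiplicative_def stuffle_eval_counit) (simp add: counit_def)

subsection \<open>The nested sums as iterated convolutions\<close>

definition word_compositions :: "'b list \<Rightarrow> 'b list list set" where
  "word_compositions w = {ws. concat ws = w \<and> [] \<notin> set ws}"

definition incr_seqs :: "nat \<Rightarrow> nat \<Rightarrow> nat list set" where
  "incr_seqs n M = {ms. length ms = n \<and> sorted_wrt (<) ms \<and> (\<forall>m\<in>set ms. 0 < m \<and> m < M)}"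

definition nested_sum :: "(nat \<Rightarrow> 'b \<Rightarrow> 'a::comm_ring_1) \<Rightarrow> nat \<Rightarrow> 'b list \<Rightarrow> 'a" where
  "nested_sum f M ws = (\<Sum>ms\<in>incr_seqs (length ws) M. \<Prod>i<length ws. f (ms ! i) (ws ! i))"

lemma word_compositions_Nil: "word_compositions [] = {[]}"
  by (auto simp: word_compositions_def)
     (metis list.set_intros(1) neq_Nil_conv)

lemma incr_seqs_0 [simp]: "incr_seqs 0 M = {[]}"
  by (auto simp: incr_seqs_def)

lemma Fsum_eq_sum_nested_sum:
  "Fsum f M w = (\<Sum>ws\<in>word_compositions w. nested_sum f M ws)"
proof (cases "w = []")
  case True
  then show ?thesis by (simp add: Fsum_def word_compositions_Nil nested_sum_def)
next
  case False
  then show ?thesis by (simp add: Fsum_def word_compositions_def nested_sum_def incr_seqs_def)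
qed

lemma finite_incr_seqs: "finite (incr_seqs n M)"
  by (rule finite_subset[of _ "{ms. set ms \<subseteq> {..<M} \<and> length ms \<le> n}"])
     (auto simp: incr_seqs_def intro: finite_lists_length_le)

lemma length_le_length_concat: "[] \<notin> set ws \<Longrightarrow> length ws \<le> length (concat ws)"
proof (induction ws)
  case (Cons x ws)
  then show ?case by (cases x) auto
qed simp

lemma finite_word_compositions: "finite (word_compositions w)"
proof (rule finite_subset)
  let ?L = "{xs. set xs \<subseteq> set w \<and> length xs \<le> length w}"
  show "word_compositions w \<subseteq> {ws. set ws \<subseteq> ?L \<and> length ws \<le> length w}"
  proof (rule subsetI)
    fix ws assume "ws \<in> word_compositions w"
    then have w: "w = concat ws" and ne: "[] \<notin> set ws"
      by (auto simp: word_compositions_def)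
    have "xs \<in> ?L" if xs: "xs \<in> set ws" for xs
    proof -
      have "length xs \<le> sum_list (map length ws)"
        by (rule member_le_sum_list) (use xs in auto)
      then show ?thesis
        using xs by (auto simp: w length_concat)
    qed
    moreover have "length ws \<le> length w"
      using length_le_length_concat[OF ne] w by simp
    ultimately show "ws \<in> {ws. set ws \<subseteq> ?L \<and> length ws \<le> length w}"
      by blast
  qed
qed (intro finite_lists_length_le; auto)

lemma incr_seqs_Suc_Suc:
  assumes "0 < M"
  shows "incr_seqs (Suc n) (Suc M) = incr_seqs (Suc n) M \<union> (\<lambda>ms. ms @ [M]) ` incr_seqs n M"
proof safe
  fix ms assume ms: "ms \<in> incr_seqs (Suc n) (Suc M)"
    and not_snoc: "ms \<notin> (\<lambda>ms. ms @ [M]) ` incr_seqs n M"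
  show "ms \<in> incr_seqs (Suc n) M"
  proof (cases "M \<in> set ms")
    case False
    with ms show ?thesis by (auto simp: incr_seqs_def less_Suc_eq)
  next
    case True
    obtain xs y where ms_eq: "ms = xs @ [y]"
      using ms by (cases ms rule: rev_exhaust) (auto simp: incr_seqs_def)
    with ms have xs: "sorted_wrt (<) xs" "\<forall>x\<in>set xs. 0 < x \<and> x < y" "y < Suc M"
      by (auto simp: incr_seqs_def sorted_wrt_append)
    with True ms_eq have "y = M" by (auto simp: less_Suc_eq)
    with xs ms ms_eq have "xs \<in> incr_seqs n M" by (auto simp: incr_seqs_def)
    with not_snoc ms_eq \<open>y = M\<close> show ?thesis by auto
  qed
qed (use assms in \<open>auto simp: incr_seqs_def sorted_wrt_append\<close>)

text \<open>Splitting off the summand with \<open>m\<^sub>k = M\<close>.\<close>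
lemma nested_sum_Suc_snoc:
  assumes "0 < M"
  shows "nested_sum f (Suc M) (ws @ [x]) = nested_sum f M (ws @ [x]) + nested_sum f M ws * f M x"
proof -
  let ?n = "length ws"
  let ?P = "\<lambda>ms. \<Prod>i<Suc ?n. f (ms ! i) ((ws @ [x]) ! i)"
  have disjoint: "incr_seqs (Suc ?n) M \<inter> (\<lambda>ms. ms @ [M]) ` incr_seqs ?n M = {}"
    by (auto simp: incr_seqs_def)
  have "nested_sum f (Suc M) (ws @ [x]) =
      nested_sum f M (ws @ [x]) + (\<Sum>ms\<in>(\<lambda>ms. ms @ [M]) ` incr_seqs ?n M. ?P ms)"
    unfolding nested_sum_def incr_seqs_Suc_Suc[OF assms] length_append_singleton
    by (rule sum.union_disjoint) (auto simp: finite_incr_seqs disjoint)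
  also have "(\<Sum>ms\<in>(\<lambda>ms. ms @ [M]) ` incr_seqs ?n M. ?P ms) = (\<Sum>ms\<in>incr_seqs ?n M. ?P (ms @ [M]))"
    by (subst sum.reindex) (auto simp: inj_on_def)
  also have "\<dots> = (\<Sum>ms\<in>incr_seqs ?n M. (\<Prod>i<?n. f (ms ! i) (ws ! i)) * f M x)"
  proof (intro sum.cong refl)
    fix ms assume "ms \<in> incr_seqs ?n M"
    then have len: "length ms = ?n" by (simp add: incr_seqs_def)
    have "(\<Prod>i<?n. f ((ms @ [M]) ! i) ((ws @ [x]) ! i)) = (\<Prod>i<?n. f (ms ! i) (ws ! i))"
      by (intro prod.cong refl) (simp add: nth_append len)
    then show "?P (ms @ [M]) = (\<Prod>i<?n. f (ms ! i) (ws ! i)) * f M x"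
      by (simp add: len nth_append)
  qed
  also have "\<dots> = nested_sum f M ws * f M x"
    by (simp add: nested_sum_def sum_distrib_right)
  finally show ?thesis .
qed

text \<open>A composition of a nonempty word is a composition of a proper prefix followed by
  the remaining suffix.\<close>
lemma sum_word_compositions_split_last:
  assumes "w \<noteq> []"
  shows "(\<Sum>ws\<in>word_compositions w. F (butlast ws) (last ws)) =
         (\<Sum>k<length w. \<Sum>ws\<in>word_compositions (take k w). F ws (drop k w))"
proof -
  have "(\<Sum>ws\<in>word_compositions w. F (butlast ws) (last ws)) =
        (\<Sum>(k, ws)\<in>Sigma {..<length w} (\<lambda>k. word_compositions (take k w)). F ws (drop k w))"
  proof (rule sum.reindex_bij_witness[where i = "\<lambda>(k, ws). ws @ [drop k w]"
        and j = "\<lambda>ws. (length (concat (butlast ws)), butlast ws)"])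
    fix ws assume "ws \<in> word_compositions w"
    then have concat_ws: "concat ws = w" and ne: "[] \<notin> set ws"
      by (auto simp: word_compositions_def)
    have "ws \<noteq> []" using concat_ws assms by auto
    then have ws_eq: "ws = butlast ws @ [last ws]" and "last ws \<noteq> []"
      using ne last_in_set by (simp, metis)
    have w_eq: "w = concat (butlast ws) @ last ws"
      using concat_ws ws_eq by (metis concat_append concat.simps append_Nil2)
    then have drop_eq: "drop (length (concat (butlast ws))) w = last ws"
      by simp
    show "(\<lambda>(k, ws). ws @ [drop k w]) (length (concat (butlast ws)), butlast ws) = ws"
      using drop_eq ws_eq by simp
    show "(\<lambda>(k, ws). F ws (drop k w)) (length (concat (butlast ws)), butlast ws) =
        F (butlast ws) (last ws)"
      using drop_eq by simp
    have "length (concat (butlast ws)) < length w"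
      using w_eq \<open>last ws \<noteq> []\<close> by simp
    moreover have "butlast ws \<in> word_compositions (take (length (concat (butlast ws))) w)"
      using ne by (subst w_eq) (auto simp: word_compositions_def dest: in_set_butlastD)
    ultimately show "(length (concat (butlast ws)), butlast ws) \<in>
        Sigma {..<length w} (\<lambda>k. word_compositions (take k w))"
      by simp
  qed (auto simp: word_compositions_def)
  also have "\<dots> = (\<Sum>k<length w. \<Sum>ws\<in>word_compositions (take k w). F ws (drop k w))"
    by (subst sum.Sigma) (auto simp: finite_word_compositions)
  finally show ?thesis .
qed

lemma Fsum_Suc:
  assumes "0 < M" "f M [] = 1"
  shows "Fsum f (Suc M) = deconc_conv (Fsum f M) (f M)"
proof
  fix w
  show "Fsum f (Suc M) w = deconc_conv (Fsum f M) (f M) w"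
  proof (cases "w = []")
    case True
    with assms show ?thesis by (simp add: Fsum_def)
  next
    case False
    have "Fsum f (Suc M) w = (\<Sum>ws\<in>word_compositions w.
        nested_sum f M ws + nested_sum f M (butlast ws) * f M (last ws))"
      unfolding Fsum_eq_sum_nested_sum
    proof (intro sum.cong refl)
      fix ws assume "ws \<in> word_compositions w"
      with False have "ws \<noteq> []"
        by (auto simp: word_compositions_def)
      then have "ws = butlast ws @ [last ws]"
        by simp
      then show "nested_sum f (Suc M) ws =
          nested_sum f M ws + nested_sum f M (butlast ws) * f M (last ws)"
        by (metis nested_sum_Suc_snoc[OF assms(1)])
    qed
    also have "\<dots> = Fsum f M w + (\<Sum>k<length w. Fsum f M (take k w) * f M (drop k w))"
      using sum_word_compositions_split_last[OF False, of "\<lambda>ws u. nested_sum f M ws * f M u"]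
      by (simp add: sum.distrib Fsum_eq_sum_nested_sum sum_distrib_right)
    also have "\<dots> = deconc_conv (Fsum f M) (f M) w"
      using assms(2) by (simp add: deconc_conv_def flip: lessThan_Suc_atMost)
    finally show ?thesis .
  qed
qed

lemma Fsum_eq_counit:
  assumes "M \<le> 1"
  shows "Fsum f M = counit"
proof
  fix w
  have no_seqs: "incr_seqs (Suc n) M = {}" for n
    using assms by (auto simp: incr_seqs_def length_Suc_conv)
  have vanish: "nested_sum f M ws = 0" if "ws \<noteq> []" for ws
    using that by (cases ws) (simp_all add: nested_sum_def no_seqs)
  show "Fsum f M w = counit w"
  proof (cases "w = []")
    case False
    then show ?thesis
      unfolding Fsum_eq_sum_nested_sum
      by (auto simp: counit_def word_compositions_def intro!: sum.neutral vanish)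
  qed (simp add: Fsum_def counit_def)
qed

theorem proposition6p8:
  fixes f :: "nat \<Rightarrow> nat list \<Rightarrow> 'a::q_algebra"
  assumes "\<And>m. 0 < m \<Longrightarrow> is_hom (f m)"
  shows "is_hom (Fsum f M)"
  unfolding is_hom_iff_stuffle_multiplicative
proof (induction M)
  case 0
  show ?case by (simp add: Fsum_eq_counit stuffle_multiplicative_counit)
next
  case (Suc M)
  show ?case
  proof (cases "M = 0")
    case True
    then show ?thesis by (simp add: Fsum_eq_counit stuffle_multiplicative_counit)
  next
    case False
    then have f_M: "stuffle_multiplicative (f M)"
      using assms is_hom_iff_stuffle_multiplicative by blast
    then have "f M [] = 1" by (simp add: stuffle_multiplicative_def)
    with False f_M Suc.IH show ?thesis
      by (simp add: Fsum_Suc stuffle_multiplicative_deconc_conv)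
  qed
qed

end
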